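(* Fix $n\ge 1$ and fixed vectors $\mathbf v_0,\dots,\mathbf v_{n+1}\in\mathbb R^d$. For every edge-factored scoring function $f_G:\mathbb R^d\times\mathbb R^d\to\mathbb R$ there exist arc-eager scoring functions $f_{\mathsf{sh}},f_{\mathsf{re}_\curvearrowleft},f_{\mathsf{ra}},f_{\mathsf{re}}:\mathbb R^d\times\mathbb R^d\to\mathbb R$ such that for every projective dependency tree $T$ on $w_0,\dots,w_n$ rooted at $w_0$, the arc-eager score of $T$ equals its edge-factored score $\sum_{(h,m)\in T} f_G(\mathbf v_h,\mathbf v_m)$. (That is, the arc-eager model contains the edge-factored model.)
   Context: Sentence $w_1,\dots,w_n$ with $w_0=\mathrm{ROOT}$ and $w_{n+1}$ an end-of-sentence marker; each position $i$ has a feature vector $\mathbf v_i\in\mathbb R^d$ (bi-LSTM outputs, treated as fixed). A dependency tree is a set of arcs $(h,m)$ (head $h$, modifier $m$). Its edge-factored score under $f_G$ is $\sum_{(h,m)}f_G(\mathbf v_h,\mathbf v_m)$. Arc-eager deduction system (items $[i^b,j]$ with $0\le i<j\le n+1$, $b\in\{0,1\}$; each item carries a score). Axiom: $[0^0,1]$ with score $0$. Rules: - sh: from $[i^b,j]:v$ with $j\le n$ derive $[j^0,j+1]:0$. - ra: from $[i^b,j]:v$ with $j\le n$ derive $[j^1,j+1]:0$. - $\mathsf{re}_\curvearrowleft$: from $[k^b,i]:v_1$ and $[i^0,j]:v_2$ derive $[k^b,j]:v_1+v_2+f_{\mathsf{sh}}(\mathbf v_k,\mathbf v_i)+f_{\mathsf{re}_\curvearrowleft}(\mathbf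 v_i,\mathbf v_j)$; this application adds the arc $(j,i)$ ($w_i$ left-modifies $w_j$). - re: from $[k^b,i]:v_1$ and $[i^1,j]:v_2$ derive $[k^b,j]:v_1+v_2+f_{\mathsf{ra}}(\mathbf v_k,\mathbf v_i)+f_{\mathsf{re}}(\mathbf v_i,\mathbf v_j)$; this application adds the arc $(k,i)$ ($w_i$ right-modifies $w_k$). Goal: $[0^0,n+1]$. A derivation of the goal encodes the dependency tree consisting of all arcs added by its $\mathsf{re}_\curvearrowleft$ and re applications, and its score is the score of the goal item computed by the rules. The arc-eager score of a tree $T$ is the maximum score over all goal derivations encoding $T$. *)

theory Defs
  imports "HOL-Analysis.Analysis"
begin

type_synonym 'd scorefn = "real ^ 'd \<Rightarrow> real ^ 'd \<Rightarrow> real"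

text \<open>Arc-eager deduction system.
  \<open>ae_derives n v fsh frel fra fre (i, b, j) s A\<close> holds iff there is a derivation
  of the item \<open>[i^b, j]\<close> (b = False: superscript 0, b = True: superscript 1) whose
  computed score is \<open>s\<close> and whose reduce applications add exactly the arc set \<open>A\<close>
  (arcs are pairs (head, modifier)).  The premise of sh / ra only serves as a side
  condition: the derived item gets score 0 and carries no arcs.\<close>
inductive ae_derives ::
  "nat \<Rightarrow> (nat \<Rightarrow> real ^ 'd) \<Rightarrow> 'd scorefn \<Rightarrow> 'd scorefn \<Rightarrow> 'd scorefn \<Rightarrow> 'd scorefn
   \<Rightarrow> nat \<times> bool \<times> nat \<Rightarrow> real \<Rightarrow> (nat \<times> nat) set \<Rightarrow> bool"
  for n v fsh frel fra fre where
  ax: "ae_derives n v fsh frel fra fre (0, False, 1) 0 {}"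
| sh: "ae_derives n v fsh frel fra fre (i, b, j) s A \<Longrightarrow> j \<le> n \<Longrightarrow>
       ae_derives n v fsh frel fra fre (j, False, j + 1) 0 {}"
| ra: "ae_derives n v fsh frel fra fre (i, b, j) s A \<Longrightarrow> j \<le> n \<Longrightarrow>
       ae_derives n v fsh frel fra fre (j, True, j + 1) 0 {}"
| reL: "ae_derives n v fsh frel fra fre (k, b, i) s1 A1 \<Longrightarrow>
        ae_derives n v fsh frel fra fre (i, False, j) s2 A2 \<Longrightarrow>
        ae_derives n v fsh frel fra fre (k, b, j)
          (s1 + s2 + fsh (v k) (v i) + frel (v i) (v j)) (A1 \<union> A2 \<union> {(j, i)})"
| re: "ae_derives n v fsh frel fra fre (k, b, i) s1 A1 \<Longrightarrow>
       ae_derives n v fsh frel fra fre (i, True, j) s2 A2 \<Longrightarrow>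
       ae_derives n v fsh frel fra fre (k, b, j)
         (s1 + s2 + fra (v k) (v i) + fre (v i) (v j)) (A1 \<union> A2 \<union> {(k, i)})"

definition ae_scores ::
  "nat \<Rightarrow> (nat \<Rightarrow> real ^ 'd) \<Rightarrow> 'd scorefn \<Rightarrow> 'd scorefn \<Rightarrow> 'd scorefn \<Rightarrow> 'd scorefn
   \<Rightarrow> (nat \<times> nat) set \<Rightarrow> real set" where
  "ae_scores n v fsh frel fra fre T = {s. ae_derives n v fsh frel fra fre (0, False, n + 1) s T}"

text \<open>\<open>E\<close> is the arc-eager score of T: the maximum over goal derivations encoding T
  (in particular such a derivation exists and the maximum is attained).\<close>
definition is_arc_eager_score ::
  "nat \<Rightarrow> (nat \<Rightarrow> real ^ 'd) \<Rightarrow> 'd scorefn \<Rightarrow> 'd scorefn \<Rightarrow> 'd scorefn \<Rightarrow> 'd scorefn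
   \<Rightarrow> (nat \<times> nat) set \<Rightarrow> real \<Rightarrow> bool" where
  "is_arc_eager_score n v fsh frel fra fre T E \<longleftrightarrow>
     E \<in> ae_scores n v fsh frel fra fre T \<and> (\<forall>s \<in> ae_scores n v fsh frel fra fre T. s \<le> E)"

definition edge_score :: "(nat \<Rightarrow> real ^ 'd) \<Rightarrow> 'd scorefn \<Rightarrow> (nat \<times> nat) set \<Rightarrow> real" where
  "edge_score v fG T = (\<Sum>(h, m) \<in> T. fG (v h) (v m))"

definition proj_dep_tree :: "nat \<Rightarrow> (nat \<times> nat) set \<Rightarrow> bool" where
  "proj_dep_tree n T \<longleftrightarrow>
     T \<subseteq> {0..n} \<times> {1..n} \<and>
     (\<forall>m \<in> {1..n}. \<exists>!h. (h, m) \<in> T) \<and>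
     (\<forall>m \<in> {1..n}. (0, m) \<in> T\<^sup>+) \<and>
     (\<forall>(h, m) \<in> T. \<forall>k. min h m < k \<and> k < max h m \<longrightarrow> (h, k) \<in> T\<^sup>+)"

end

theory Submission
  imports Defs
begin

text \<open>Take \<open>f_sh = f_re = 0\<close>, \<open>f_ra = f_G\<close> and \<open>f_reL(x, y) = f_G(y, x)\<close>. Then each
  reduce step pays exactly \<open>f_G\<close> of the arc it adds, and since the two premises of a reduce step
  cover disjoint spans, every derivation scores exactly the edge-factored score of its arc set; so
  the maximum is attained as soon as one goal derivation of \<open>T\<close> exists. For that, call a span
  \<open>[k, j]\<close> closed if all words strictly inside have their head in \<open>[k, j]\<close>. Some arc enters
  the open span from an endpoint \<open>e\<close>; the child \<open>i\<close> of \<open>e\<close> inside the span farthest from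
  \<open>e\<close> is crossed by no arc, by projectivity and acyclicity, so \<open>[k, i]\<close> and \<open>[i, j]\<close> are
  again closed and \<open>[k, j]\<close> is derived from them by a reduce step adding \<open>(e, i)\<close>.\<close>

lemma trancl_last_step_unique:
  assumes "single_valued (R\<inverse>)" and "(a, i) \<in> R\<^sup>+" and "(p, i) \<in> R"
  shows "(a, p) \<in> R\<^sup>*"
  using assms by (metis converse.intros single_valuedD tranclD2)

lemma ancestor_on_cycle:
  assumes sv: "single_valued (R\<inverse>)"
  shows "(a, x) \<in> R\<^sup>+ \<Longrightarrow> (x, x) \<in> R\<^sup>+ \<Longrightarrow> (x, a) \<in> R\<^sup>+"
proof (induction rule: trancl_induct)
  case (base x)
  then have "(x, a) \<in> R\<^sup>*" using trancl_last_step_unique[OF sv] by blast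
  then show ?case using base.prems by (metis rtrancl_eq_or_trancl)
next
  case (step y x)
  have "(x, y) \<in> R\<^sup>*" using trancl_last_step_unique[OF sv step.prems step.hyps(2)] .
  then have "(y, y) \<in> R\<^sup>+" using step.hyps(2) by (meson rtrancl_into_trancl2 trancl_rtrancl_trancl r_into_trancl')
  then show ?case using step.IH \<open>(x, y) \<in> R\<^sup>*\<close> by (meson rtrancl_trancl_trancl)
qed

lemma trancl_enters_set:
  "(a, m) \<in> R\<^sup>+ \<Longrightarrow> a \<notin> S \<Longrightarrow> m \<in> S \<Longrightarrow> \<exists>x y. (x, y) \<in> R \<and> x \<notin> S \<and> y \<in> S"
  by (induction rule: trancl_induct) blast+

lemma ae_derives_item_bounds:
  assumes "ae_derives n v fsh frel fra fre (i, b, j) s A"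
  shows "i < j \<and> finite A \<and> (\<forall>(h, m) \<in> A. i < m \<and> m < j)"
  using assms by (induction "(i, b, j)" s A arbitrary: i b j rule: ae_derives.induct) fastforce+

lemma edge_score_insert_union:
  assumes "finite A1" "finite A2" "A1 \<inter> A2 = {}" "(h, m) \<notin> A1 \<union> A2"
  shows "edge_score v f (A1 \<union> A2 \<union> {(h, m)}) = edge_score v f A1 + edge_score v f A2 + f (v h) (v m)"
  using assms by (simp add: edge_score_def sum.union_disjoint)

lemma ae_derives_score_eq_edge_score:
  assumes "ae_derives n v (\<lambda>_ _. 0) (\<lambda>x y. fG y x) fG (\<lambda>_ _. 0) it s A"
  shows "s = edge_score v fG A"
  using assms
proof (induction rule: ae_derives.induct)
  case (reL k b i s1 A1 j s2 A2)
  have "edge_score v fG (A1 \<union> A2 \<union> {(j, i)}) = edge_score v fG A1 + edge_score v fG A2 + fG (v j) (v i)"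
    using ae_derives_item_bounds[OF reL.hyps(1)] ae_derives_item_bounds[OF reL.hyps(2)]
    by (intro edge_score_insert_union) fastforce+
  with reL.IH show ?case by simp
next
  case (re k b i s1 A1 j s2 A2)
  have "edge_score v fG (A1 \<union> A2 \<union> {(k, i)}) = edge_score v fG A1 + edge_score v fG A2 + fG (v k) (v i)"
    using ae_derives_item_bounds[OF re.hyps(1)] ae_derives_item_bounds[OF re.hyps(2)]
    by (intro edge_score_insert_union) fastforce+
  with re.IH show ?case by simp
qed (simp_all add: edge_score_def)

lemma ae_derives_unit_item:
  "k \<le> n \<Longrightarrow> (b \<Longrightarrow> 0 < k) \<Longrightarrow> ae_derives n v fsh frel fra fre (k, b, Suc k) 0 {}"
proof (induction k arbitrary: b)
  case 0
  then show ?case using ae_derives.ax by fastforce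
next
  case (Suc k)
  then have "ae_derives n v fsh frel fra fre (k, False, Suc k) 0 {}" by simp
  then show ?case using ae_derives.sh ae_derives.ra Suc.prems(1) by (cases b) fastforce+
qed

locale projective_tree =
  fixes n :: nat and T :: "(nat \<times> nat) set"
  assumes tree: "proj_dep_tree n T"
begin

lemma arc_range: "T \<subseteq> {0..n} \<times> {1..n}"
  using tree by (simp add: proj_dep_tree_def)

lemma single_valued_heads: "single_valued (T\<inverse>)"
  using tree arc_range unfolding proj_dep_tree_def single_valued_def by blast

lemma root_reaches: "m \<in> {1..n} \<Longrightarrow> (0, m) \<in> T\<^sup>+"
  using tree by (simp add: proj_dep_tree_def)

lemma projective: "(h, m) \<in> T \<Longrightarrow> min h m < k \<Longrightarrow> k < max h m \<Longrightarrow> (h, k) \<in> T\<^sup>+"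
  using tree unfolding proj_dep_tree_def by fast

lemma acyclic_tree: "acyclic T"
proof (rule acyclicI, intro allI notI)
  fix x assume cycle: "(x, x) \<in> T\<^sup>+"
  then obtain p where "(p, x) \<in> T" by (meson tranclD2)
  with arc_range have "x \<in> {1..n}" by auto
  then have "(0, x) \<in> T\<^sup>+" by (rule root_reaches)
  from ancestor_on_cycle[OF single_valued_heads this cycle] obtain q where "(q, 0) \<in> T"
    by (meson tranclD2)
  with arc_range show False by auto
qed

definition span_closed :: "nat \<Rightarrow> nat \<Rightarrow> bool" where
  "span_closed k j \<longleftrightarrow> (\<forall>h m. (h, m) \<in> T \<longrightarrow> k < m \<longrightarrow> m < j \<longrightarrow> k \<le> h \<and> h \<le> j)"

definition span_arcs :: "nat \<Rightarrow> nat \<Rightarrow> (nat \<times> nat) set" where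
  "span_arcs k j = {(h, m) \<in> T. k < m \<and> m < j}"

definition outermost_arc :: "nat \<Rightarrow> nat \<Rightarrow> nat \<Rightarrow> nat \<Rightarrow> bool" where
  "outermost_arc k j e i \<longleftrightarrow> (e = k \<or> e = j) \<and> (e, i) \<in> T \<and> k < i \<and> i < j \<and>
     (\<forall>m. (e, m) \<in> T \<longrightarrow> k < m \<longrightarrow> m < j \<longrightarrow> \<not> (min e m < i \<and> i < max e m))"

lemma outermost_arc_not_crossed:
  assumes closed: "span_closed k j" and outer: "outermost_arc k j e i"
    and hm: "(h, m) \<in> T" "k < m" "m < j" "m \<noteq> i"
  shows "\<not> (min h m < i \<and> i < max h m)"
proof
  assume cross: "min h m < i \<and> i < max h m"
  from outer have e: "e = k \<or> e = j" and ei: "(e, i) \<in> T" and i: "k < i" "i < j"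
    unfolding outermost_arc_def by auto
  have h: "k \<le> h" "h \<le> j" using closed hm unfolding span_closed_def by auto
  have "(h, i) \<in> T\<^sup>+" using projective[OF hm(1)] cross by simp
  then have "(h, e) \<in> T\<^sup>*" using trancl_last_step_unique[OF single_valued_heads _ ei] by blast
  moreover have "h \<noteq> e"
  proof
    assume "h = e"
    with outer hm cross show False unfolding outermost_arc_def by blast
  qed
  ultimately have he: "(h, e) \<in> T\<^sup>+" by (metis rtrancl_eq_or_trancl)
  have "(e, h) \<in> T\<^sup>*"
  proof (cases "min e i < m \<and> m < max e i")
    case True
    then have "(e, m) \<in> T\<^sup>+" using projective[OF ei] by simp
    then show ?thesis using trancl_last_step_unique[OF single_valued_heads _ hm(1)] by blast
  next
    case False
    then have "min e i < h \<and> h < max e i" using e h i cross hm \<open>h \<noteq> e\<close> by linarith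
    then have "(e, h) \<in> T\<^sup>+" using projective[OF ei] by simp
    then show ?thesis by simp
  qed
  with he have "(e, e) \<in> T\<^sup>+" by (meson rtrancl_trancl_trancl)
  with acyclic_tree show False unfolding acyclic_def by blast
qed

lemma outermost_arc_splits_span:
  assumes closed: "span_closed k j" and outer: "outermost_arc k j e i"
  shows "span_closed k i" "span_closed i j"
proof -
  note not_crossed = outermost_arc_not_crossed[OF closed outer]
  from outer have i: "k < i" "i < j" unfolding outermost_arc_def by auto
  show "span_closed k i" unfolding span_closed_def
  proof (intro allI impI)
    fix h m assume hm: "(h, m) \<in> T" "k < m" "m < i"
    with closed i have "k \<le> h" "h \<le> j" unfolding span_closed_def by auto
    moreover have "\<not> i < h" using not_crossed[of h m] hm i by auto
    ultimately show "k \<le> h \<and> h \<le> i" by auto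
  qed
  show "span_closed i j" unfolding span_closed_def
  proof (intro allI impI)
    fix h m assume hm: "(h, m) \<in> T" "i < m" "m < j"
    with closed i have "k \<le> h" "h \<le> j" unfolding span_closed_def by auto
    moreover have "\<not> h < i" using not_crossed[of h m] hm i by auto
    ultimately show "i \<le> h \<and> h \<le> j" by auto
  qed
qed

lemma exists_outermost_arc:
  assumes kj: "Suc k < j" "j \<le> Suc n" and closed: "span_closed k j"
  obtains e i where "outermost_arc k j e i"
proof -
  have "(0, Suc k) \<in> T\<^sup>+" using kj by (intro root_reaches) auto
  then obtain e m where em: "(e, m) \<in> T" "e \<notin> {k<..<j}" "m \<in> {k<..<j}"
    using trancl_enters_set[of 0 "Suc k" T "{k<..<j}"] kj by auto
  with closed have e: "e = k \<or> e = j" unfolding span_closed_def by fastforce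
  let ?child = "\<lambda>m. (e, m) \<in> T \<and> k < m \<and> m < j"
  have "\<exists>i. ?child i \<and> (\<forall>m. ?child m \<longrightarrow> max e m - min e m \<le> max e i - min e i)"
    by (rule ex_has_greatest_nat[where b = "Suc j"]) (use em e in auto)
  then obtain i where i: "?child i"
    and farthest: "\<And>m. ?child m \<Longrightarrow> max e m - min e m \<le> max e i - min e i" by blast
  have "\<not> (min e m < i \<and> i < max e m)" if child: "?child m" for m
    using farthest[OF child] by auto
  with e i show ?thesis by (intro that[of e i]) (auto simp: outermost_arc_def)
qed

lemma span_arcs_decompose:
  assumes "(e, i) \<in> T" "k < i" "i < j"
  shows "span_arcs k j = span_arcs k i \<union> span_arcs i j \<union> {(e, i)}"
proof (rule set_eqI)
  fix p :: "nat \<times> nat"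
  obtain h m where p: "p = (h, m)" by fastforce
  have "h = e" if "m = i" "(h, m) \<in> T"
    using single_valuedD[OF single_valued_heads] that assms(1) by blast
  with assms show "p \<in> span_arcs k j \<longleftrightarrow> p \<in> span_arcs k i \<union> span_arcs i j \<union> {(e, i)}"
    unfolding p span_arcs_def by (cases m i rule: linorder_cases) auto
qed

lemma span_arcs_derivable:
  "k < j \<Longrightarrow> j \<le> Suc n \<Longrightarrow> (b \<Longrightarrow> 0 < k) \<Longrightarrow> span_closed k j \<Longrightarrow>
   \<exists>s. ae_derives n v fsh frel fra fre (k, b, j) s (span_arcs k j)"
proof (induction "j - k" arbitrary: k j b rule: less_induct)
  case less
  show ?case
  proof (cases "j = Suc k")
    case True
    then have "span_arcs k j = {}" unfolding span_arcs_def by auto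
    moreover have "ae_derives n v fsh frel fra fre (k, b, j) 0 {}"
      using True less.prems by (simp add: ae_derives_unit_item)
    ultimately show ?thesis by auto
  next
    case False
    with less.prems obtain e i where outer: "outermost_arc k j e i"
      by (metis Suc_lessI exists_outermost_arc)
    then have e: "e = k \<or> e = j" and ei: "(e, i) \<in> T" and i: "k < i" "i < j"
      unfolding outermost_arc_def by auto
    note closed = outermost_arc_splits_span[OF less.prems(4) outer]
    have "\<exists>s. ae_derives n v fsh frel fra fre (k, b, i) s (span_arcs k i)"
      by (rule less.hyps) (use less.prems closed i in auto)
    then obtain s1 where left: "ae_derives n v fsh frel fra fre (k, b, i) s1 (span_arcs k i)" ..
    have "\<exists>s. ae_derives n v fsh frel fra fre (i, e = k, j) s (span_arcs i j)"
      by (rule less.hyps) (use less.prems closed i in auto)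
    then obtain s2 where right: "ae_derives n v fsh frel fra fre (i, e = k, j) s2 (span_arcs i j)" ..
    have arcs: "span_arcs k j = span_arcs k i \<union> span_arcs i j \<union> {(e, i)}"
      using span_arcs_decompose[OF ei i] .
    show ?thesis
    proof (cases "e = k")
      case True
      with right have "ae_derives n v fsh frel fra fre (i, True, j) s2 (span_arcs i j)" by simp
      from ae_derives.re[OF left this] show ?thesis unfolding arcs True ..
    next
      case False
      with right have "ae_derives n v fsh frel fra fre (i, False, j) s2 (span_arcs i j)" by simp
      moreover from False e have "e = j" by simp
      ultimately show ?thesis using ae_derives.reL[OF left] unfolding arcs by blast
    qed
  qed
qed

end

theorem lemma1:
  fixes n :: nat and v :: "nat \<Rightarrow> real ^ 'd" and fG :: "real ^ 'd \<Rightarrow> real ^ 'd \<Rightarrow> real"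
  assumes "n \<ge> 1"
  shows "\<exists>fsh frel fra fre :: real ^ 'd \<Rightarrow> real ^ 'd \<Rightarrow> real.
           \<forall>T. proj_dep_tree n T \<longrightarrow>
             is_arc_eager_score n v fsh frel fra fre T (edge_score v fG T)"
proof (intro exI allI impI)
  fix T assume "proj_dep_tree n T"
  then interpret projective_tree n T by unfold_locales
  have "span_arcs 0 (Suc n) = T" using arc_range unfolding span_arcs_def by auto
  moreover have "span_closed 0 (Suc n)" using arc_range unfolding span_closed_def by auto
  ultimately obtain s where
    "ae_derives n v (\<lambda>_ _. 0) (\<lambda>x y. fG y x) fG (\<lambda>_ _. 0) (0, False, Suc n) s T"
    using span_arcs_derivable[where v = v and fsh = "\<lambda>_ _. 0" and frel = "\<lambda>x y. fG y x"
        and fra = fG and fre = "\<lambda>_ _. 0" and b = False and k = 0 and j = "Suc n"] by auto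
  then have "ae_scores n v (\<lambda>_ _. 0) (\<lambda>x y. fG y x) fG (\<lambda>_ _. 0) T = {edge_score v fG T}"
    unfolding ae_scores_def by (auto dest: ae_derives_score_eq_edge_score)
  then show "is_arc_eager_score n v (\<lambda>_ _. 0) (\<lambda>x y. fG y x) fG (\<lambda>_ _. 0) T (edge_score v fG T)"
    unfolding is_arc_eager_score_def by simp
qed

end
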